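(* Let $\mathcal{H}$ be a real Hilbert space and let $\phi:\mathcal{H}\to(-\infty,+\infty]$ be a function such that $\phi+\tfrac12\|\cdot\|^2\in\Gamma_0(\mathcal{H})$. Then for every $\delta>0$, the proximity operator of the $(\delta+1)^{-1}$-weakly convex function $\phi/(\delta+1)$ is single-valued and $$\mathrm{s\text{-}Prox}_{\phi/(\delta+1)}=\big[\mathbf{Prox}_{\phi}^{-1}+\delta\,\mathrm{Id}\big]^{-1}\circ(\delta+1)\mathrm{Id}.$$
   Context: $\Gamma_0(\mathcal{H})$ is the set of proper lower semicontinuous convex functions $\mathcal{H}\to(-\infty,+\infty]$. $\mathrm{Id}$ is the identity on $\mathcal{H}$. For a proper function $g$ and $\gamma>0$, $\mathbf{Prox}_{\gamma g}:\mathcal{H}\to2^{\mathcal{H}}$, $x\mapsto\operatorname{argmin}_{y\in\mathcal{H}}\big(g(y)+\frac{1}{2\gamma}\|x-y\|^2\big)$; when this set is a singleton for every $x$, the resulting single-valued map $\mathcal{H}\to\mathcal{H}$ is denoted $\mathrm{s\text{-}Prox}_{\gamma g}$. The inverse of a set-valued operator $\mathsf{T}$ is $\mathsf{T}^{-1}(y)=\{x\in\mathcal{H}: y\in\mathsf{T}(x)\}$, and the sum of set-valued operators is $(\mathsf{T}+\delta\mathrm{Id})(x)=\{u+\delta x: u\in\mathsf{T}(x)\}$. *)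

theory Defs
  imports "HOL-Analysis.Analysis" "HOL-Library.Extended_Real"
begin

definition proper_fun :: "('a \<Rightarrow> ereal) \<Rightarrow> bool" where
  "proper_fun f \<longleftrightarrow> (\<forall>x. f x \<noteq> -\<infinity>) \<and> (\<exists>x. f x \<noteq> \<infinity>)"

definition econvex :: "('a::real_vector \<Rightarrow> ereal) \<Rightarrow> bool" where
  "econvex f \<longleftrightarrow> (\<forall>x y t. 0 \<le> t \<and> t \<le> 1 \<longrightarrow>
      f ((1 - t) *\<^sub>R x + t *\<^sub>R y) \<le> ereal (1 - t) * f x + ereal t * f y)"

definition lsc :: "('a::topological_space \<Rightarrow> ereal) \<Rightarrow> bool" where
  "lsc f \<longleftrightarrow> (\<forall>c::real. closed {x. f x \<le> ereal c})"

definition Gamma0 :: "('a::real_normed_vector \<Rightarrow> ereal) \<Rightarrow> bool" where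
  "Gamma0 f \<longleftrightarrow> proper_fun f \<and> econvex f \<and> lsc f"

definition Prox :: "real \<Rightarrow> ('a::real_normed_vector \<Rightarrow> ereal) \<Rightarrow> 'a \<Rightarrow> 'a set" where
  "Prox \<gamma> g x = {y. \<forall>z. g y + ereal ((norm (x - y))\<^sup>2 / (2 * \<gamma>))
                          \<le> g z + ereal ((norm (x - z))\<^sup>2 / (2 * \<gamma>))}"

definition set_inv :: "('a \<Rightarrow> 'b set) \<Rightarrow> 'b \<Rightarrow> 'a set" where
  "set_inv T y = {x. y \<in> T x}"

definition plus_scaled_id :: "('a \<Rightarrow> 'a set) \<Rightarrow> real \<Rightarrow> 'a::real_vector \<Rightarrow> 'a set" where
  "plus_scaled_id T \<delta> x = (\<lambda>u. u + \<delta> *\<^sub>R x) ` T x"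

end

theory Submission
  imports Defs
begin

text \<open>
  Put \<psi> = \<phi> + |.|^2/2 and v = (\<delta> + 1) x. Up to a positive factor and an additive constant,
  the objective defining the proximity operator of \<phi>/(\<delta> + 1) at x is
  G = \<psi> + \<delta>/2 |.|^2 - <v, .>. As \<psi> is convex, proper and lower semicontinuous, G is
  \<delta>-strongly convex: by the parallelogram law every minimising sequence of G is Cauchy, so G
  has exactly one minimiser. On the other side, y lies in ((Prox \<phi>)^-1 + \<delta> Id)^-1 v iff y
  minimises \<psi> - <v - \<delta> y, .>, which is the first-order optimality condition of G at y.
\<close>

definition argmin_on :: "'a set \<Rightarrow> ('a \<Rightarrow> real) \<Rightarrow> 'a set" where
  "argmin_on D f = {y \<in> D. \<forall>z\<in>D. f y \<le> f z}"

lemma argmin_on_scale_shift: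
  assumes "c > 0" and "\<And>z. z \<in> D \<Longrightarrow> f z = c * g z + k"
  shows "argmin_on D f = argmin_on D g"
  using assms by (auto simp: argmin_on_def)

lemma convex_on_closed_sublevel_lower_bound:
  fixes r :: "'a::real_normed_vector \<Rightarrow> real"
  assumes conv: "convex_on D r" and closed: "\<And>c. closed {y\<in>D. r y \<le> c}" and y0: "y0 \<in> D"
  obtains K where "K \<ge> 0" and "\<And>y. y \<in> D \<Longrightarrow> r y0 - 1 - K * norm (y - y0) \<le> r y"
proof -
  have "open (- {y\<in>D. r y \<le> r y0 - 1})" using closed by (rule open_Compl)
  moreover have "y0 \<in> - {y\<in>D. r y \<le> r y0 - 1}" by simp
  ultimately obtain e where e: "e > 0" and "\<forall>y. dist y y0 < e \<longrightarrow> y \<in> - {y\<in>D. r y \<le> r y0 - 1}"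
    unfolding open_dist by blast
  then have ball: "r y0 - 1 < r y" if "y \<in> D" "dist y y0 < e" for y
    using that by auto
  have "r y0 - 1 - 2/e * norm (y - y0) \<le> r y" if y: "y \<in> D" for y
  proof (cases "norm (y - y0) < e")
    case True
    then have "r y0 - 1 < r y" using ball y by (simp add: dist_norm)
    moreover have "0 \<le> 2/e * norm (y - y0)" using e by simp
    ultimately show ?thesis by linarith
  next
    case False
    \<comment> \<open>The point z of the segment from y0 to y at distance e/2 from y0 has r z > r y0 - 1.\<close>
    define n where "n = norm (y - y0)"
    have n: "0 < e" "e \<le> n" using False e by (simp_all add: n_def)
    define t where "t = e / (2 * n)"
    have t: "0 < t" "t \<le> 1" "1 / t = 2/e * n"
      using n by (auto simp: t_def field_simps)
    define z where "z = (1 - t) *\<^sub>R y0 + t *\<^sub>R y"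
    have zD: "z \<in> D" using conv y0 y t unfolding z_def convex_on_def by (simp add: convexD)
    have "z - y0 = t *\<^sub>R (y - y0)" by (simp add: z_def algebra_simps)
    then have "dist z y0 = e / 2"
      using t n by (simp add: dist_norm flip: n_def) (simp add: t_def)
    then have "r y0 - 1 < r z" using ball zD e by simp
    also have "r z \<le> (1 - t) * r y0 + t * r y"
      using convex_onD[OF conv] t y0 y unfolding z_def by simp
    finally have "r y0 - 1 / t < r y" using t by (simp add: field_simps)
    then show ?thesis using t by (simp add: n_def)
  qed
  moreover have "2/e \<ge> 0" using e by simp
  ultimately show ?thesis using that by blast
qed

lemma midpoint_in_convex:
  assumes "convex S" "a \<in> S" "b \<in> S"
  shows "midpoint a b \<in> S"
  using assms midpoint_in_closed_segment unfolding convex_contains_segment by blast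

lemma bdd_below_convex_plus_quadratic:
  fixes r :: "'a::real_inner \<Rightarrow> real"
  assumes conv: "convex_on D r" and closed: "\<And>c. closed {y\<in>D. r y \<le> c}" and d: "d > 0"
  shows "bdd_below ((\<lambda>y. r y + d/2 * (norm y)\<^sup>2 - inner u y) ` D)"
proof (cases "D = {}")
  case False
  then obtain y0 where y0: "y0 \<in> D" by blast
  obtain K where K: "K \<ge> 0" "\<And>y. y \<in> D \<Longrightarrow> r y0 - 1 - K * norm (y - y0) \<le> r y"
    using convex_on_closed_sublevel_lower_bound[OF conv closed y0] by blast
  define L where "L = K + norm u"
  have "r y0 - 1 - K * norm y0 - L\<^sup>2 / (2*d) \<le> r y + d/2 * (norm y)\<^sup>2 - inner u y"
    if y: "y \<in> D" for y
  proof -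
    have "K * norm (y - y0) \<le> K * (norm y + norm y0)"
      by (intro mult_left_mono norm_triangle_ineq4 K(1))
    moreover have "inner u y \<le> norm u * norm y" by (rule norm_cauchy_schwarz)
    moreover have "L * norm y \<le> d/2 * (norm y)\<^sup>2 + L\<^sup>2 / (2*d)"
    proof -
      have "0 \<le> (d * norm y - L)\<^sup>2 / (2*d)" using d by simp
      then show ?thesis using d by (simp add: field_simps power2_eq_square)
    qed
    ultimately show ?thesis using K(2)[OF y] by (simp add: L_def algebra_simps)
  qed
  then show ?thesis by (rule bdd_belowI2)
qed simp

lemma closed_sublevel_add_continuous:
  fixes r q :: "'a::metric_space \<Rightarrow> real"
  assumes closed: "\<And>c. closed {y\<in>D. r y \<le> c}" and q: "continuous_on UNIV q"
  shows "closed {y\<in>D. r y + q y \<le> c}"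
  unfolding closed_sequential_limits
proof (intro allI impI, elim conjE)
  fix ys l assume "\<forall>n. ys n \<in> {y\<in>D. r y + q y \<le> c}" and lim: "ys \<longlonglongrightarrow> l"
  then have ysD: "ys n \<in> D" and ysc: "r (ys n) + q (ys n) \<le> c" for n by auto
  have qlim: "(\<lambda>n. q (ys n)) \<longlonglongrightarrow> q l"
    using continuous_on_tendsto_compose[OF q lim] by simp
  have key: "l \<in> D \<and> r l \<le> c - q l + e" if e: "e > 0" for e
  proof -
    have "eventually (\<lambda>n. q l - e < q (ys n)) sequentially"
      using order_tendstoD(1)[OF qlim] e by simp
    then have "eventually (\<lambda>n. ys n \<in> {y\<in>D. r y \<le> c - q l + e}) sequentially"
    proof eventually_elim
      case (elim n)
      then show ?case using ysD[of n] ysc[of n] by simp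
    qed
    then show ?thesis using Lim_in_closed_set[OF closed _ _ lim] by simp
  qed
  have "r l \<le> c - q l" by (rule field_le_epsilon) (use key in blast)
  then show "l \<in> {y\<in>D. r y + q y \<le> c}" using key[of 1] by simp
qed

lemma convex_plus_quadratic_midpoint_le:
  fixes r :: "'a::real_inner \<Rightarrow> real"
  assumes conv: "convex_on D r" and "a \<in> D" "b \<in> D"
  shows "r (midpoint a b) + d/2 * (norm (midpoint a b))\<^sup>2 - inner u (midpoint a b)
    \<le> ((r a + d/2 * (norm a)\<^sup>2 - inner u a) + (r b + d/2 * (norm b)\<^sup>2 - inner u b)) / 2
       - d/8 * (norm (a - b))\<^sup>2"
proof -
  have norm_mid: "(norm (midpoint a b))\<^sup>2 = ((norm a)\<^sup>2 + (norm b)\<^sup>2) / 2 - (norm (a - b))\<^sup>2 / 4"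
    by (simp add: midpoint_def power2_norm_eq_inner inner_add inner_diff inner_commute field_simps)
  have "r (midpoint a b) \<le> (r a + r b) / 2"
    using convex_onD[OF conv, of "1/2" a b] assms by (simp add: midpoint_def scaleR_add_right)
  moreover have "d/2 * (norm (midpoint a b))\<^sup>2
      = (d/2 * (norm a)\<^sup>2 + d/2 * (norm b)\<^sup>2) / 2 - d/8 * (norm (a - b))\<^sup>2"
    unfolding norm_mid by (simp add: algebra_simps)
  moreover have "inner u (midpoint a b) = (inner u a + inner u b) / 2"
    by (simp add: midpoint_def inner_add_right)
  ultimately show ?thesis by argo
qed

lemma Cauchy_minimizing_sequence:
  fixes G :: "'a::real_normed_vector \<Rightarrow> real"
  assumes mid: "\<And>a b. a \<in> D \<Longrightarrow> b \<in> D \<Longrightarrow> \<exists>c\<in>D. G c \<le> (G a + G b) / 2 - \<kappa> * (norm (a - b))\<^sup>2"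
    and \<kappa>: "\<kappa> > 0" and bdd: "bdd_below (G ` D)"
    and ys: "\<And>n. ys n \<in> D" and lim: "(\<lambda>n. G (ys n)) \<longlonglongrightarrow> Inf (G ` D)"
  shows "Cauchy ys"
proof (rule metric_CauchyI)
  fix e :: real assume e: "e > 0"
  define m where "m = Inf (G ` D)"
  have gap: "\<kappa> * (norm (a - b))\<^sup>2 \<le> (G a + G b) / 2 - m" if ab: "a \<in> D" "b \<in> D" for a b
  proof -
    obtain c where "c \<in> D" "G c \<le> (G a + G b) / 2 - \<kappa> * (norm (a - b))\<^sup>2"
      using mid[OF ab] by blast
    moreover have "m \<le> G c" using \<open>c \<in> D\<close> bdd by (simp add: m_def cInf_lower)
    ultimately show ?thesis by linarith
  qed
  have "eventually (\<lambda>n. G (ys n) < m + \<kappa> * e\<^sup>2) sequentially"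
    using order_tendstoD(2)[OF lim] \<kappa> e by (simp add: m_def)
  then obtain M where M: "\<And>n. n \<ge> M \<Longrightarrow> G (ys n) < m + \<kappa> * e\<^sup>2"
    by (auto simp: eventually_sequentially)
  have "dist (ys a) (ys b) < e" if "a \<ge> M" "b \<ge> M" for a b
  proof -
    have "\<kappa> * (norm (ys a - ys b))\<^sup>2 < \<kappa> * e\<^sup>2"
      using gap[OF ys ys, of a b] M[OF that(1)] M[OF that(2)] by argo
    then have "(norm (ys a - ys b))\<^sup>2 < e\<^sup>2" using \<kappa> by simp
    then show ?thesis using e by (simp add: dist_norm power_less_imp_less_base)
  qed
  then show "\<exists>M. \<forall>a\<ge>M. \<forall>b\<ge>M. dist (ys a) (ys b) < e" by blast
qed

lemma argmin_on_convex_plus_quadratic_nonempty: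
  fixes r :: "'a::{real_inner, complete_space} \<Rightarrow> real"
  assumes conv: "convex_on D r" and closed: "\<And>c. closed {y\<in>D. r y \<le> c}"
    and ne: "D \<noteq> {}" and d: "d > 0"
  shows "argmin_on D (\<lambda>y. r y + d/2 * (norm y)\<^sup>2 - inner u y) \<noteq> {}"
proof -
  define G where "G = (\<lambda>y. r y + d/2 * (norm y)\<^sup>2 - inner u y)"
  define m where "m = Inf (G ` D)"
  have bdd: "bdd_below (G ` D)"
    unfolding G_def using conv closed d by (rule bdd_below_convex_plus_quadratic)
  have "m \<in> closure (G ` D)"
    unfolding m_def using ne by (intro closure_contains_Inf bdd) blast
  then obtain xs where xs: "\<And>n. xs n \<in> G ` D" and xs_lim: "xs \<longlonglongrightarrow> m"
    unfolding closure_sequential by blast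
  have "\<forall>n. \<exists>y\<in>D. xs n = G y" using xs by (simp add: image_iff)
  then obtain ys where ys: "\<And>n. ys n \<in> D" and G_ys: "\<And>n. xs n = G (ys n)" by metis
  have lim: "(\<lambda>n. G (ys n)) \<longlonglongrightarrow> m" using xs_lim by (simp flip: G_ys)
  have "convex D" using conv by (simp add: convex_on_def)
  have "\<exists>c\<in>D. G c \<le> (G a + G b) / 2 - d/8 * (norm (a - b))\<^sup>2" if "a \<in> D" "b \<in> D" for a b
    using convex_plus_quadratic_midpoint_le[OF conv that, where d=d and u=u]
      midpoint_in_convex[OF \<open>convex D\<close> that]
    unfolding G_def by blast
  then have "Cauchy ys"
    using d bdd ys lim unfolding m_def by (intro Cauchy_minimizing_sequence[where \<kappa>="d/8"]) simp_all
  then obtain y where y: "ys \<longlonglongrightarrow> y"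
    using Cauchy_convergent_iff convergent_def by blast
  have closed_G: "closed {y\<in>D. G y \<le> c}" for c
  proof -
    have "closed {y\<in>D. r y + (d/2 * (norm y)\<^sup>2 - inner u y) \<le> c}"
      using closed by (rule closed_sublevel_add_continuous) (intro continuous_intros)
    then show ?thesis by (simp add: G_def add_diff_eq)
  qed
  have y_sub: "y \<in> D \<and> G y \<le> m + e" if "e > 0" for e
  proof -
    have "eventually (\<lambda>n. ys n \<in> {y\<in>D. G y \<le> m + e}) sequentially"
      using order_tendstoD(2)[OF lim, of "m + e"] that ys by (auto elim: eventually_mono)
    then show ?thesis using Lim_in_closed_set[OF closed_G _ _ y] by simp
  qed
  have "G y \<le> m" by (rule field_le_epsilon) (use y_sub in blast)
  moreover have "m \<le> G z" if "z \<in> D" for z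
    unfolding m_def using bdd that by (simp add: cInf_lower)
  ultimately have "y \<in> argmin_on D G"
    using y_sub[of 1] unfolding argmin_on_def by fastforce
  then show ?thesis unfolding G_def by blast
qed

lemma argmin_on_convex_plus_quadratic_unique:
  fixes r :: "'a::real_inner \<Rightarrow> real"
  assumes conv: "convex_on D r" and d: "d > 0"
    and a: "a \<in> argmin_on D (\<lambda>y. r y + d/2 * (norm y)\<^sup>2 - inner u y)"
    and b: "b \<in> argmin_on D (\<lambda>y. r y + d/2 * (norm y)\<^sup>2 - inner u y)"
  shows "a = b"
proof -
  define G where "G = (\<lambda>y. r y + d/2 * (norm y)\<^sup>2 - inner u y)"
  have ab: "a \<in> D" "b \<in> D" using a b by (simp_all add: argmin_on_def)
  have "midpoint a b \<in> D"
    using conv ab by (intro midpoint_in_convex) (simp_all add: convex_on_def)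
  then have "G a \<le> G (midpoint a b)" "G b \<le> G (midpoint a b)"
    using a b unfolding G_def argmin_on_def by blast+
  moreover have "G (midpoint a b) \<le> (G a + G b) / 2 - d/8 * (norm (a - b))\<^sup>2"
    unfolding G_def using conv ab by (rule convex_plus_quadratic_midpoint_le)
  ultimately have "d/8 * (norm (a - b))\<^sup>2 \<le> 0" by argo
  then show ?thesis using d by (simp add: mult_le_0_iff)
qed

lemma argmin_on_convex_plus_quadratic_singleton:
  fixes r :: "'a::{real_inner, complete_space} \<Rightarrow> real"
  assumes "convex_on D r" and "\<And>c. closed {y\<in>D. r y \<le> c}" and "D \<noteq> {}" and "d > 0"
  obtains y where "argmin_on D (\<lambda>y. r y + d/2 * (norm y)\<^sup>2 - inner u y) = {y}"
  using argmin_on_convex_plus_quadratic_nonempty[OF assms, of u]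
    argmin_on_convex_plus_quadratic_unique[OF assms(1,4), of _ u]
  by blast

lemma plus_quadratic_expansion:
  fixes v y z :: "'a::real_inner"
  shows "r z + d/2 * (norm z)\<^sup>2 - inner v z
    = r y + d/2 * (norm y)\<^sup>2 - inner v y
      + ((r z - inner (v - d *\<^sub>R y) z) - (r y - inner (v - d *\<^sub>R y) y))
      + d/2 * (norm (z - y))\<^sup>2"
  by (simp add: power2_norm_eq_inner inner_diff inner_commute algebra_simps)

lemma nonneg_if_linear_plus_quadratic_nonneg:
  fixes a c :: real
  assumes nonneg: "\<And>t. 0 < t \<Longrightarrow> t \<le> 1 \<Longrightarrow> 0 \<le> t * a + c * t\<^sup>2"
  shows "0 \<le> a"
proof -
  have "((\<lambda>t. a + c * t) \<longlongrightarrow> a) (at_right 0)"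
    by (auto intro!: tendsto_eq_intros)
  moreover have "eventually (\<lambda>t. 0 \<le> a + c * t) (at_right 0)"
    unfolding eventually_at_right_field
  proof (intro exI conjI allI impI)
    fix t :: real assume "0 < t" "t < 1"
    then have "0 \<le> t * (a + c * t)"
      using nonneg[of t] by (simp add: power2_eq_square algebra_simps)
    then show "0 \<le> a + c * t" using \<open>0 < t\<close> by (simp add: zero_le_mult_iff)
  qed simp
  ultimately show ?thesis by (rule tendsto_lowerbound) simp
qed

lemma argmin_on_convex_plus_quadratic_iff:
  fixes r :: "'a::real_inner \<Rightarrow> real"
  assumes conv: "convex_on D r" and d: "d \<ge> 0"
  shows "y \<in> argmin_on D (\<lambda>z. r z + d/2 * (norm z)\<^sup>2 - inner v z)
     \<longleftrightarrow> y \<in> argmin_on D (\<lambda>z. r z - inner (v - d *\<^sub>R y) z)"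
proof -
  define G where "G = (\<lambda>z. r z + d/2 * (norm z)\<^sup>2 - inner v z)"
  define L where "L = (\<lambda>z. r z - inner (v - d *\<^sub>R y) z)"
  have expand: "G z = G y + (L z - L y) + d/2 * (norm (z - y))\<^sup>2" for z
    unfolding G_def L_def by (rule plus_quadratic_expansion)
  have "0 \<le> L z - L y" if y: "y \<in> D" and min: "\<forall>z\<in>D. G y \<le> G z" and z: "z \<in> D" for z
  proof (rule nonneg_if_linear_plus_quadratic_nonneg)
    fix t :: real assume t: "0 < t" "t \<le> 1"
    define yt where "yt = (1 - t) *\<^sub>R y + t *\<^sub>R z"
    have "yt \<in> D"
      using conv y z t unfolding yt_def convex_on_def by (simp add: convexD_alt)
    then have "G y \<le> G yt" using min by blast
    moreover have "yt - y = t *\<^sub>R (z - y)" by (simp add: yt_def algebra_simps)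
    then have "(norm (yt - y))\<^sup>2 = t\<^sup>2 * (norm (z - y))\<^sup>2" by (simp add: power_mult_distrib)
    moreover have "L yt \<le> (1 - t) * L y + t * L z"
      using convex_onD[OF conv, of t y z] y z t
      by (simp add: L_def yt_def inner_add_right algebra_simps)
    ultimately show "0 \<le> t * (L z - L y) + d/2 * (norm (z - y))\<^sup>2 * t\<^sup>2"
      using expand[of yt] by (simp add: algebra_simps)
  qed
  moreover have "G y \<le> G z" if "\<forall>z\<in>D. L y \<le> L z" and "z \<in> D" for z
  proof -
    have "L y \<le> L z" and "0 \<le> d/2 * (norm (z - y))\<^sup>2" using that d by simp_all
    then show ?thesis using expand[of z] by linarith
  qed
  ultimately have "y \<in> argmin_on D G \<longleftrightarrow> y \<in> argmin_on D L"
    unfolding argmin_on_def by auto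
  then show ?thesis by (simp add: G_def L_def)
qed

lemma Gamma0_finite_part:
  fixes \<psi> :: "'a::real_normed_vector \<Rightarrow> ereal"
  assumes "Gamma0 \<psi>"
  obtains D r where "D \<noteq> {}" and "convex_on D r" and "\<And>c. closed {y\<in>D. r y \<le> c}"
    and "\<And>y. y \<notin> D \<Longrightarrow> \<psi> y = \<infinity>" and "\<And>y. y \<in> D \<Longrightarrow> \<psi> y = ereal (r y)"
proof
  define D where "D = {y. \<psi> y \<noteq> \<infinity>}"
  define r where "r y = real_of_ereal (\<psi> y)" for y
  have proper: "\<And>y. \<psi> y \<noteq> -\<infinity>" "\<exists>y. \<psi> y \<noteq> \<infinity>"
    and cvx: "econvex \<psi>" and lsc: "lsc \<psi>"
    using assms by (auto simp: Gamma0_def proper_fun_def)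
  show "D \<noteq> {}" using proper(2) by (simp add: D_def)
  show \<psi>_out: "\<psi> y = \<infinity>" if "y \<notin> D" for y using that by (simp add: D_def)
  show \<psi>_in: "\<psi> y = ereal (r y)" if "y \<in> D" for y
    using that proper(1)[of y] by (cases "\<psi> y") (simp_all add: D_def r_def)
  have segment: "\<psi> ((1 - t) *\<^sub>R a + t *\<^sub>R b) \<le> ereal ((1 - t) * r a + t * r b)"
    if "a \<in> D" "b \<in> D" "0 \<le> t" "t \<le> 1" for a b t
  proof -
    have "\<psi> ((1 - t) *\<^sub>R a + t *\<^sub>R b) \<le> ereal (1 - t) * \<psi> a + ereal t * \<psi> b"
      using cvx that by (simp add: econvex_def)
    then show ?thesis using that by (simp add: \<psi>_in)
  qed
  have segment_D: "(1 - t) *\<^sub>R a + t *\<^sub>R b \<in> D"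
    if "a \<in> D" "b \<in> D" "0 \<le> t" "t \<le> 1" for a b t
    using segment[OF that] by (auto simp: D_def)
  then have "convex D" unfolding convex_alt by blast
  then show "convex_on D r"
  proof (rule convex_onI[rotated])
    fix t :: real and a b assume "0 < t" "t < 1" "a \<in> D" "b \<in> D"
    then show "r ((1 - t) *\<^sub>R a + t *\<^sub>R b) \<le> (1 - t) * r a + t * r b"
      using segment[of a b t] \<psi>_in[OF segment_D[of a b t]] by simp
  qed
  show "closed {y\<in>D. r y \<le> c}" for c
  proof -
    have "{y\<in>D. r y \<le> c} = {y. \<psi> y \<le> ereal c}"
    proof (intro set_eqI iffI)
      fix y assume "y \<in> {y. \<psi> y \<le> ereal c}"
      moreover from this have "y \<in> D" by (auto simp: D_def)
      ultimately show "y \<in> {y\<in>D. r y \<le> c}" using \<psi>_in[of y] by simp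
    qed (simp add: \<psi>_in)
    then show ?thesis using lsc by (simp add: lsc_def)
  qed
qed

lemma Gamma0_plus_half_norm_sq_finite_part:
  fixes \<phi> :: "'a::real_normed_vector \<Rightarrow> ereal"
  assumes "Gamma0 (\<lambda>x. \<phi> x + ereal ((norm x)\<^sup>2 / 2))"
  obtains D r where "D \<noteq> {}" and "convex_on D r" and "\<And>c. closed {y\<in>D. r y \<le> c}"
    and "\<And>y. y \<notin> D \<Longrightarrow> \<phi> y = \<infinity>" and "\<And>y. y \<in> D \<Longrightarrow> \<phi> y = ereal (r y - (norm y)\<^sup>2 / 2)"
proof -
  obtain D r where "D \<noteq> {}" "convex_on D r" "\<And>c. closed {y\<in>D. r y \<le> c}"
    and out: "\<And>y. y \<notin> D \<Longrightarrow> \<phi> y + ereal ((norm y)\<^sup>2 / 2) = \<infinity>"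
    and inn: "\<And>y. y \<in> D \<Longrightarrow> \<phi> y + ereal ((norm y)\<^sup>2 / 2) = ereal (r y)"
    using Gamma0_finite_part[OF assms] by blast
  moreover have "\<phi> y = \<infinity>" if "y \<notin> D" for y
    using out[OF that] by (cases "\<phi> y") simp_all
  moreover have "\<phi> y = ereal (r y - (norm y)\<^sup>2 / 2)" if "y \<in> D" for y
    using inn[OF that] by (cases "\<phi> y") simp_all
  ultimately show thesis using that by blast
qed

lemma Prox_eq_argmin_on:
  fixes g :: "'a::real_normed_vector \<Rightarrow> ereal"
  assumes ne: "D \<noteq> {}" and out: "\<And>z. z \<notin> D \<Longrightarrow> g z = \<infinity>"
    and inn: "\<And>z. z \<in> D \<Longrightarrow> g z = ereal (h z)"
  shows "Prox \<gamma> g x = argmin_on D (\<lambda>z. h z + (norm (x - z))\<^sup>2 / (2 * \<gamma>))"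
proof (intro set_eqI iffI)
  fix y assume y: "y \<in> Prox \<gamma> g x"
  then have le: "g y + ereal ((norm (x - y))\<^sup>2 / (2 * \<gamma>)) \<le> g z + ereal ((norm (x - z))\<^sup>2 / (2 * \<gamma>))"
    for z by (simp add: Prox_def)
  obtain y0 where "y0 \<in> D" using ne by blast
  have "y \<in> D"
  proof (rule ccontr)
    assume "y \<notin> D"
    then show False using le[of y0] out inn[OF \<open>y0 \<in> D\<close>] by simp
  qed
  moreover have "h y + (norm (x - y))\<^sup>2 / (2 * \<gamma>) \<le> h z + (norm (x - z))\<^sup>2 / (2 * \<gamma>)"
    if "z \<in> D" for z
    using le[of z] inn[OF that] inn[OF \<open>y \<in> D\<close>] by simp
  ultimately show "y \<in> argmin_on D (\<lambda>z. h z + (norm (x - z))\<^sup>2 / (2 * \<gamma>))"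
    by (simp add: argmin_on_def)
next
  fix y assume "y \<in> argmin_on D (\<lambda>z. h z + (norm (x - z))\<^sup>2 / (2 * \<gamma>))"
  then have "y \<in> D" and min: "\<And>z. z \<in> D \<Longrightarrow>
      h y + (norm (x - y))\<^sup>2 / (2 * \<gamma>) \<le> h z + (norm (x - z))\<^sup>2 / (2 * \<gamma>)"
    by (simp_all add: argmin_on_def)
  have "g y + ereal ((norm (x - y))\<^sup>2 / (2 * \<gamma>)) \<le> g z + ereal ((norm (x - z))\<^sup>2 / (2 * \<gamma>))"
    for z
    by (cases "z \<in> D") (simp_all add: out inn min \<open>y \<in> D\<close>)
  then show "y \<in> Prox \<gamma> g x" by (simp add: Prox_def)
qed

lemma Prox_scaled_eq_argmin_on:
  fixes \<phi> :: "'a::real_inner \<Rightarrow> ereal"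
  assumes ne: "D \<noteq> {}" and out: "\<And>z. z \<notin> D \<Longrightarrow> \<phi> z = \<infinity>"
    and inn: "\<And>z. z \<in> D \<Longrightarrow> \<phi> z = ereal (r z - (norm z)\<^sup>2 / 2)"
    and \<delta>: "\<delta> > -1"
  shows "Prox 1 (\<lambda>z. ereal (1 / (\<delta> + 1)) * \<phi> z) x
    = argmin_on D (\<lambda>z. r z + \<delta>/2 * (norm z)\<^sup>2 - inner ((\<delta> + 1) *\<^sub>R x) z)"
proof -
  have "Prox 1 (\<lambda>z. ereal (1 / (\<delta> + 1)) * \<phi> z) x
      = argmin_on D (\<lambda>z. (r z - (norm z)\<^sup>2 / 2) / (\<delta> + 1) + (norm (x - z))\<^sup>2 / (2 * 1))"
    by (rule Prox_eq_argmin_on[OF ne]) (use \<delta> out inn in simp_all)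
  also have "\<dots> = argmin_on D (\<lambda>z. r z + \<delta>/2 * (norm z)\<^sup>2 - inner ((\<delta> + 1) *\<^sub>R x) z)"
  proof (rule argmin_on_scale_shift)
    show "0 < 1 / (\<delta> + 1)" using \<delta> by simp
    fix z
    show "(r z - (norm z)\<^sup>2 / 2) / (\<delta> + 1) + (norm (x - z))\<^sup>2 / (2 * 1)
      = 1 / (\<delta> + 1) * (r z + \<delta>/2 * (norm z)\<^sup>2 - inner ((\<delta> + 1) *\<^sub>R x) z) + (norm x)\<^sup>2 / 2"
      using \<delta> by (simp add: inner_add_left dot_norm_neg[of x z] field_simps)
  qed
  finally show ?thesis .
qed

lemma set_inv_plus_scaled_id_set_inv_iff:
  "y \<in> set_inv (plus_scaled_id (set_inv T) \<delta>) w \<longleftrightarrow> y \<in> T (w - \<delta> *\<^sub>R y)"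
  by (force simp: set_inv_def plus_scaled_id_def)

lemma set_inv_plus_scaled_id_Prox_eq_argmin_on:
  fixes \<phi> :: "'a::real_inner \<Rightarrow> ereal"
  assumes ne: "D \<noteq> {}" and out: "\<And>z. z \<notin> D \<Longrightarrow> \<phi> z = \<infinity>"
    and inn: "\<And>z. z \<in> D \<Longrightarrow> \<phi> z = ereal (r z - (norm z)\<^sup>2 / 2)"
    and conv: "convex_on D r" and \<delta>: "\<delta> \<ge> 0"
  shows "set_inv (plus_scaled_id (set_inv (Prox 1 \<phi>)) \<delta>) v
    = argmin_on D (\<lambda>z. r z + \<delta>/2 * (norm z)\<^sup>2 - inner v z)"
proof (rule set_eqI)
  fix w
  have Prox_\<phi>: "Prox 1 \<phi> u = argmin_on D (\<lambda>z. r z - inner u z)" for u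
    using Prox_scaled_eq_argmin_on[OF ne out inn, of 0 u] by simp
  have "w \<in> set_inv (plus_scaled_id (set_inv (Prox 1 \<phi>)) \<delta>) v \<longleftrightarrow> w \<in> Prox 1 \<phi> (v - \<delta> *\<^sub>R w)"
    by (rule set_inv_plus_scaled_id_set_inv_iff)
  also have "\<dots> \<longleftrightarrow> w \<in> argmin_on D (\<lambda>z. r z + \<delta>/2 * (norm z)\<^sup>2 - inner v z)"
    unfolding Prox_\<phi> by (rule argmin_on_convex_plus_quadratic_iff[OF conv \<delta>, symmetric])
  finally show "w \<in> set_inv (plus_scaled_id (set_inv (Prox 1 \<phi>)) \<delta>) v
    \<longleftrightarrow> w \<in> argmin_on D (\<lambda>z. r z + \<delta>/2 * (norm z)\<^sup>2 - inner v z)" .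
qed

theorem theorem2:
  fixes \<phi> :: "'a::{real_inner, complete_space} \<Rightarrow> ereal"
    and \<delta> :: real
  assumes "Gamma0 (\<lambda>x. \<phi> x + ereal ((norm x)\<^sup>2 / 2))"
    and "\<delta> > 0"
  shows "\<forall>x. \<exists>y. Prox 1 (\<lambda>z. ereal (1 / (\<delta> + 1)) * \<phi> z) x = {y}
              \<and> set_inv (plus_scaled_id (set_inv (Prox 1 \<phi>)) \<delta>) ((\<delta> + 1) *\<^sub>R x) = {y}"
proof
  fix x :: 'a
  obtain D r where ne: "D \<noteq> {}" and conv: "convex_on D r" and closed: "\<And>c. closed {y\<in>D. r y \<le> c}"
    and out: "\<And>y. y \<notin> D \<Longrightarrow> \<phi> y = \<infinity>" and inn: "\<And>y. y \<in> D \<Longrightarrow> \<phi> y = ereal (r y - (norm y)\<^sup>2 / 2)"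
    using Gamma0_plus_half_norm_sq_finite_part[OF assms(1)] by blast
  let ?G = "\<lambda>z. r z + \<delta>/2 * (norm z)\<^sup>2 - inner ((\<delta> + 1) *\<^sub>R x) z"
  obtain y where y: "argmin_on D ?G = {y}"
    using argmin_on_convex_plus_quadratic_singleton[OF conv closed ne assms(2)] by blast
  have "Prox 1 (\<lambda>z. ereal (1 / (\<delta> + 1)) * \<phi> z) x = argmin_on D ?G"
    using assms(2) by (intro Prox_scaled_eq_argmin_on[OF ne out inn]) simp_all
  moreover have "set_inv (plus_scaled_id (set_inv (Prox 1 \<phi>)) \<delta>) ((\<delta> + 1) *\<^sub>R x) = argmin_on D ?G"
    using set_inv_plus_scaled_id_Prox_eq_argmin_on[OF ne out inn conv] assms(2) by simp
  ultimately show "\<exists>y. Prox 1 (\<lambda>z. ereal (1 / (\<delta> + 1)) * \<phi> z) x = {y}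
      \<and> set_inv (plus_scaled_id (set_inv (Prox 1 \<phi>)) \<delta>) ((\<delta> + 1) *\<^sub>R x) = {y}"
    using y by blast
qed

end
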